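(* Let $A,B,C$ be complex vector spaces with $\dim A\le \dim B=\dim C=\mathbf{b}$. Let $T\in A\otimes B\otimes C$ be a concise tensor such that the space $T(A^* )\subset B\otimes C$ has bounded rank $\mathbf{b}-1$ and is primitive. Then $T$ does not have border rank $\mathbf{b}$.
   Context: $T(A^* )$ is the image of the contraction $T_A:A^*\to B\otimes C$, a space of linear maps $B^*\to C$; write $\varphi(\alpha):B^*\to C$ for the map given by $\alpha\in A^*$. It has bounded rank $r$ if the maximal rank of its elements is $r<\min\{\dim B,\dim C\}$. $T$ is concise if the three induced maps $A^*\to B\otimes C$, $B^*\to A\otimes C$, $C^*\to A\otimes B$ are injective. A space $T(A^* )$ of bounded rank $r$ is imprimitive if there is a hyperplane $H\subset B^*$ such that all restrictions $\varphi(\alpha)|_H$ have rank $\le r-1$, or a hyperplane $H\subset C^*$ such that all restrictions $\varphi(\alpha)^{\mathbf t}|_H$ have rank $\le r-1$; otherwise it is primitive. Border rank of $T$: the smallest $s$ such that $T$ is a limit of sums of $s$ tensors of the form $a\otimes b\otimes c$. *)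

theory Defs
  imports Complex_Main "HOL-Library.Function_Algebras" "HOL-Library.Cardinality"
begin

text \<open>Finite-dimensional complex vector spaces are modelled as function spaces
  over finite index types: A = ('a => complex), etc.  A tensor in A (x) B (x) C is a
  function 'a => 'b => 'c => complex (its coordinate array).  The dual space A*
  is likewise identified with ('a => complex) via the dual basis.\<close>

definition cscale :: "complex \<Rightarrow> ('i \<Rightarrow> complex) \<Rightarrow> ('i \<Rightarrow> complex)" where
  "cscale c v = (\<lambda>x. c * v x)"

lemma vector_space_cscale: "vector_space (cscale :: complex \<Rightarrow> ('i \<Rightarrow> complex) \<Rightarrow> _)"
  by unfold_locales (auto simp: cscale_def fun_eq_iff algebra_simps)

definition cdim :: "('i \<Rightarrow> complex) set \<Rightarrow> nat" where
  "cdim V = vector_space.dim cscale V"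

definition csubspace :: "('i \<Rightarrow> complex) set \<Rightarrow> bool" where
  "csubspace V = module.subspace cscale V"

definition hyperplane :: "('i::finite \<Rightarrow> complex) set \<Rightarrow> bool" where
  "hyperplane H \<longleftrightarrow> csubspace H \<and> cdim H = CARD('i) - 1"

type_synonym ('a,'b,'c) tensor = "'a \<Rightarrow> 'b \<Rightarrow> 'c \<Rightarrow> complex"

text \<open>phi(alpha) : B* -> C, the image of alpha under T_A : A* -> B (x) C.\<close>
definition phi :: "('a::finite,'b::finite,'c::finite) tensor \<Rightarrow> ('a \<Rightarrow> complex)
    \<Rightarrow> ('b \<Rightarrow> complex) \<Rightarrow> ('c \<Rightarrow> complex)" where
  "phi T \<alpha> \<beta> = (\<lambda>k. \<Sum>i\<in>UNIV. \<Sum>j\<in>UNIV. \<alpha> i * \<beta> j * T i j k)"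

definition phiT :: "('a::finite,'b::finite,'c::finite) tensor \<Rightarrow> ('a \<Rightarrow> complex)
    \<Rightarrow> ('c \<Rightarrow> complex) \<Rightarrow> ('b \<Rightarrow> complex)" where
  "phiT T \<alpha> \<gamma> = (\<lambda>j. \<Sum>i\<in>UNIV. \<Sum>k\<in>UNIV. \<alpha> i * \<gamma> k * T i j k)"

definition rank_on :: "(('i \<Rightarrow> complex) \<Rightarrow> ('o \<Rightarrow> complex)) \<Rightarrow> ('i \<Rightarrow> complex) set \<Rightarrow> nat" where
  "rank_on f H = cdim (f ` H)"

definition lrank :: "(('i \<Rightarrow> complex) \<Rightarrow> ('o \<Rightarrow> complex)) \<Rightarrow> nat" where
  "lrank f = rank_on f UNIV"

definition concise :: "('a::finite,'b::finite,'c::finite) tensor \<Rightarrow> bool" where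
  "concise T \<longleftrightarrow>
     inj (\<lambda>\<alpha>::'a \<Rightarrow> complex. \<lambda>j k. \<Sum>i\<in>UNIV. \<alpha> i * T i j k) \<and>
     inj (\<lambda>\<beta>::'b \<Rightarrow> complex. \<lambda>i k. \<Sum>j\<in>UNIV. \<beta> j * T i j k) \<and>
     inj (\<lambda>\<gamma>::'c \<Rightarrow> complex. \<lambda>i j. \<Sum>k\<in>UNIV. \<gamma> k * T i j k)"

definition bounded_rank :: "('a::finite,'b::finite,'c::finite) tensor \<Rightarrow> nat \<Rightarrow> bool" where
  "bounded_rank T r \<longleftrightarrow>
     (\<exists>\<alpha>. lrank (phi T \<alpha>) = r) \<and> (\<forall>\<alpha>. lrank (phi T \<alpha>) \<le> r) \<and>
     r < min CARD('b) CARD('c)"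

definition imprimitive :: "('a::finite,'b::finite,'c::finite) tensor \<Rightarrow> nat \<Rightarrow> bool" where
  "imprimitive T r \<longleftrightarrow>
     (\<exists>H :: ('b \<Rightarrow> complex) set. hyperplane H \<and> (\<forall>\<alpha>. rank_on (phi T \<alpha>) H \<le> r - 1)) \<or>
     (\<exists>H :: ('c \<Rightarrow> complex) set. hyperplane H \<and> (\<forall>\<alpha>. rank_on (phiT T \<alpha>) H \<le> r - 1))"

definition primitive_bounded_rank :: "('a::finite,'b::finite,'c::finite) tensor \<Rightarrow> nat \<Rightarrow> bool" where
  "primitive_bounded_rank T r \<longleftrightarrow> bounded_rank T r \<and> \<not> imprimitive T r"

definition sum_rank_one :: "nat \<Rightarrow> (nat \<Rightarrow> 'a \<Rightarrow> complex) \<Rightarrow> (nat \<Rightarrow> 'b \<Rightarrow> complex)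
    \<Rightarrow> (nat \<Rightarrow> 'c \<Rightarrow> complex) \<Rightarrow> ('a,'b,'c) tensor" where
  "sum_rank_one s a b c = (\<lambda>i j k. \<Sum>l<s. a l i * b l j * c l k)"

text \<open>T is a limit (in the Euclidean topology, i.e. coordinatewise) of sums of s rank-one tensors.\<close>
definition border_rank_le :: "('a::finite,'b::finite,'c::finite) tensor \<Rightarrow> nat \<Rightarrow> bool" where
  "border_rank_le T s \<longleftrightarrow>
     (\<exists>a b c. \<forall>i j k. (\<lambda>n. sum_rank_one s (a n) (b n) (c n) i j k) \<longlonglongrightarrow> T i j k)"

definition border_rank :: "('a::finite,'b::finite,'c::finite) tensor \<Rightarrow> nat" where
  "border_rank T = (LEAST s. border_rank_le T s)"

end

(*
  Identify C with B by a bijection g, so that each slice phi(alpha) becomes a square matrix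
  M(alpha).  For a sum of b rank-one tensors M(alpha) = B diag(d alpha) C^T, and
  M(a1) adj(M(a2)) M(a3) = M(a3) adj(M(a2)) M(a1) (Strassen's equations); by continuity of the
  adjugate they persist for every T of border rank at most b.
  Bounded rank b - 1 makes every M(alpha) singular, and at a slice alpha0 of rank b - 1 the
  adjugate is a nonzero rank-one matrix a v^T with v spanning ker phi(alpha0).  Strassen's
  equation with a2 = alpha0 then says that phi(alpha)^t(a) (x) phi(alpha')(v) is symmetric in
  alpha, alpha'; by conciseness neither factor vanishes identically, so all phi(alpha) v lie on
  one line spanned by c0.  Consequently each phi(alpha)^t maps the hyperplane c0^perp into v^perp.
  If one of these restrictions had rank b - 1 it would be injective, injectivity on c0^perp is an
  open condition, and at a nearby alpha with phi(alpha) v <> 0 this forces phi(alpha)^t to be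
  injective, contradicting the bound on the rank.  Hence T(A^* ) would be imprimitive.
*)

theory Submission
  imports Defs "HOL-Analysis.Analysis" "HOL-Computational_Algebra.Polynomial"
begin

section \<open>Coordinate spaces\<close>

interpretation cs: vector_space "cscale :: complex \<Rightarrow> ('i \<Rightarrow> complex) \<Rightarrow> _"
  by (rule vector_space_cscale)

definition unit_vec :: "'i \<Rightarrow> 'i \<Rightarrow> complex" where
  "unit_vec i = (\<lambda>j. if j = i then 1 else 0)"

lemma cscale_apply [simp]: "cscale c v x = c * v x"
  by (simp add: cscale_def)

lemma sum_fun_apply: "(sum f S) x = (\<Sum>i\<in>S. f i x)" for f :: "_ \<Rightarrow> 'i \<Rightarrow> complex"
  by (induct S rule: infinite_finite_induct) auto

lemma sum_unit_vec_mult [simp]: "(\<Sum>j\<in>UNIV. unit_vec i j * f j) = f (i::'i::finite)"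
proof -
  have "(\<Sum>j\<in>UNIV. unit_vec i j * f j) = (\<Sum>j\<in>UNIV. if j = i then f j else 0)"
    by (intro sum.cong) (auto simp: unit_vec_def)
  then show ?thesis by simp
qed

lemma sum_mult_unit_vec [simp]: "(\<Sum>j\<in>UNIV. f j * unit_vec i j) = f (i::'i::finite)"
  using sum_unit_vec_mult[of i f] by (simp add: mult.commute)

lemma sum_cscale_unit_vec: "(\<Sum>i\<in>UNIV. cscale (v i) (unit_vec i)) = (v::'i::finite \<Rightarrow> complex)"
proof
  fix x
  have "(\<Sum>i\<in>UNIV. v i * unit_vec i x) = (\<Sum>i\<in>UNIV. v i * unit_vec x i)"
    by (intro sum.cong) (auto simp: unit_vec_def)
  then show "(\<Sum>i\<in>UNIV. cscale (v i) (unit_vec i)) x = v x"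
    by (simp add: sum_fun_apply)
qed

lemma span_unit_vec: "cs.span (range unit_vec) = (UNIV :: ('i::finite \<Rightarrow> complex) set)"
proof -
  have "(\<Sum>i\<in>UNIV. cscale (v i) (unit_vec i)) \<in> cs.span (range unit_vec)" for v :: "'i \<Rightarrow> complex"
    by (intro cs.span_sum cs.span_scale cs.span_base) auto
  then show ?thesis by (auto simp: sum_cscale_unit_vec)
qed

lemma inj_unit_vec: "inj unit_vec"
  by (rule injI) (metis unit_vec_def zero_neq_one)

lemma independent_unit_vec: "cs.independent (range (unit_vec :: 'i::finite \<Rightarrow> _))"
proof -
  have "c v = 0" if c: "(\<Sum>v\<in>range (unit_vec :: 'i \<Rightarrow> _). cscale (c v) v) = 0"
    and v: "v \<in> range unit_vec" for c v
  proof -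
    obtain i where vi: "v = unit_vec i" using v by blast
    have "0 = (\<Sum>j\<in>UNIV. cscale (c (unit_vec j)) (unit_vec j)) i"
      using c by (simp add: sum.reindex[OF inj_unit_vec])
    also have "\<dots> = (\<Sum>j\<in>UNIV. c (unit_vec j) * unit_vec i j)"
      by (simp add: sum_fun_apply unit_vec_def eq_commute)
    finally show "c v = 0" using vi by simp
  qed
  then show ?thesis by (subst cs.dependent_finite) auto
qed

interpretation cs_fd: finite_dimensional_vector_space
  "cscale :: complex \<Rightarrow> ('i::finite \<Rightarrow> complex) \<Rightarrow> _" "range unit_vec"
  by unfold_locales (auto simp: independent_unit_vec span_unit_vec)

lemma cdim_UNIV: "cdim (UNIV :: ('i::finite \<Rightarrow> complex) set) = CARD('i)"
  unfolding cdim_def using cs_fd.dim_UNIV card_image[OF inj_unit_vec] by simp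

lemma linear_cscaleI:
  assumes "\<And>x y. f (x + y) = f x + f y" and "\<And>c x. f (cscale c x) = cscale c (f x)"
  shows "Vector_Spaces.linear cscale cscale (f :: ('i \<Rightarrow> complex) \<Rightarrow> ('o \<Rightarrow> complex))"
  using assms by (simp add: Vector_Spaces.linear_iff vector_space_cscale)

lemma linear_phi: "Vector_Spaces.linear cscale cscale (phi T \<alpha>)"
  by (rule linear_cscaleI) (auto simp: phi_def fun_eq_iff algebra_simps sum.distrib sum_distrib_left)

lemma linear_phiT: "Vector_Spaces.linear cscale cscale (phiT T \<alpha>)"
  by (rule linear_cscaleI) (auto simp: phiT_def fun_eq_iff algebra_simps sum.distrib sum_distrib_left)

lemma cdim_image_add_card_kernel_le:
  fixes f :: "('i::finite \<Rightarrow> complex) \<Rightarrow> ('o \<Rightarrow> complex)"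
  assumes lin: "Vector_Spaces.linear cscale cscale f"
    and S: "cs.subspace S" and K: "K \<subseteq> S" "cs.independent K" "\<forall>k\<in>K. f k = 0"
  shows "cdim (f ` S) + card K \<le> cdim S"
proof -
  interpret lf: Vector_Spaces.linear cscale cscale f by (rule lin)
  obtain B where B: "K \<subseteq> B" "B \<subseteq> S" "cs.independent B" "S \<subseteq> cs.span B"
    using cs.maximal_independent_subset_extend[OF K(1) K(2)] by blast
  have fB: "finite B" using B(3) by (rule cs_fd.finiteI_independent)
  have "f ` S \<subseteq> cs.span (f ` B)"
    using B(4) lf.span_image by blast
  also have "\<dots> \<subseteq> cs.span (f ` (B - K))"
  proof (intro cs.span_minimal subsetI)
    fix y assume "y \<in> f ` B"
    then obtain x where x: "x \<in> B" "y = f x" by blast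
    show "y \<in> cs.span (f ` (B - K))"
    proof (cases "x \<in> K")
      case True then show ?thesis using K(3) x cs.span_zero by auto
    next
      case False then show ?thesis using x by (intro cs.span_base) auto
    qed
  qed simp
  finally have "cs.dim (f ` S) \<le> card (f ` (B - K))"
    using fB by (intro cs.dim_le_card) auto
  also have "\<dots> \<le> card B - card K"
    using fB B(1) card_image_le[of "B - K" f] by (simp add: card_Diff_subset finite_subset)
  finally show ?thesis
    using cs.basis_card_eq_dim[OF B(2) B(4) B(3)] card_mono[OF fB B(1)]
    unfolding cdim_def by linarith
qed

lemma kernel_collinear_if_corank_one:
  fixes f :: "('i::finite \<Rightarrow> complex) \<Rightarrow> ('o \<Rightarrow> complex)"
  assumes lin: "Vector_Spaces.linear cscale cscale f"
    and r: "cdim (range f) + 1 = CARD('i)"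
    and u: "f u = 0" and v: "f v = 0" "v \<noteq> 0"
  shows "\<exists>c. u = cscale c v"
proof (rule ccontr)
  assume nc: "\<not> (\<exists>c. u = cscale c v)"
  then have uv: "u \<noteq> v" by (metis cscale_def mult_1 ext)
  have "u \<notin> cs.span {v}" using nc by (auto simp: cs.span_singleton)
  then have ind: "cs.independent {u, v}" using uv v(2) by (simp add: cs.independent_insert)
  have "cdim (range f) + card {u, v} \<le> cdim (UNIV :: ('i \<Rightarrow> complex) set)"
    by (rule cdim_image_add_card_kernel_le[OF lin]) (use ind u v in auto)
  then show False using r uv cdim_UNIV[where 'i='i] by simp
qed

lemma inj_on_if_cdim_le_cdim_image:
  fixes f :: "('i::finite \<Rightarrow> complex) \<Rightarrow> ('o \<Rightarrow> complex)"
  assumes lin: "Vector_Spaces.linear cscale cscale f"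
    and S: "cs.subspace S" and d: "cdim S \<le> cdim (f ` S)"
  shows "inj_on f S"
proof (rule inj_onI, rule ccontr)
  interpret lf: Vector_Spaces.linear cscale cscale f by (rule lin)
  fix x y assume xy: "x \<in> S" "y \<in> S" "f x = f y" "x \<noteq> y"
  then have "cdim (f ` S) + card {x - y} \<le> cdim S"
    by (intro cdim_image_add_card_kernel_le[OF lin S])
       (auto simp: cs.independent_insert cs.subspace_diff[OF S] lf.diff)
  then show False using d by simp
qed

definition pairing :: "('i::finite \<Rightarrow> complex) \<Rightarrow> ('i \<Rightarrow> complex) \<Rightarrow> complex" where
  "pairing \<gamma> c = (\<Sum>k\<in>UNIV. \<gamma> k * c k)"

lemma pairing_add: "pairing (\<gamma> + \<gamma>') c = pairing \<gamma> c + pairing \<gamma>' c"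
  by (simp add: pairing_def algebra_simps sum.distrib)

lemma pairing_diff: "pairing (\<gamma> - \<gamma>') c = pairing \<gamma> c - pairing \<gamma>' c"
  by (simp add: pairing_def algebra_simps sum_subtractf)

lemma pairing_cscale: "pairing (cscale s \<gamma>) c = s * pairing \<gamma> c"
  by (simp add: pairing_def sum_distrib_left mult_ac)

lemma pairing_zero [simp]: "pairing 0 c = 0"
  by (simp add: pairing_def)

lemma pairing_exists_one:
  assumes "c \<noteq> 0"
  obtains \<gamma>1 where "pairing \<gamma>1 c = 1"
proof -
  obtain k where k: "c k \<noteq> 0" using assms by (auto simp: fun_eq_iff)
  have "pairing (cscale (inverse (c k)) (unit_vec k)) c = 1"
    using k by (simp add: pairing_def mult.assoc flip: sum_distrib_left)
  then show ?thesis by (rule that)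
qed

lemma hyperplane_pairing_kernel:
  assumes "c \<noteq> 0"
  shows "hyperplane {\<gamma> :: 'c::finite \<Rightarrow> complex. pairing \<gamma> c = 0}"
proof -
  let ?H = "{\<gamma> :: 'c \<Rightarrow> complex. pairing \<gamma> c = 0}"
  obtain \<gamma>1 where s1: "pairing \<gamma>1 c = 1" using pairing_exists_one[OF assms] .
  have sub: "cs.subspace ?H"
    unfolding cs.subspace_def by (simp add: pairing_add pairing_cscale)
  have "\<gamma>1 \<notin> cs.span ?H" using s1 by (simp add: cs.span_eq_iff[THEN iffD2, OF sub])
  then have dim_insert: "cs.dim (insert \<gamma>1 ?H) = cs.dim ?H + 1" by (simp add: cs_fd.dim_insert)
  have "\<gamma> \<in> cs.span (insert \<gamma>1 ?H)" for \<gamma>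
  proof -
    have "\<gamma> - cscale (pairing \<gamma> c) \<gamma>1 \<in> cs.span (insert \<gamma>1 ?H)"
      by (rule cs.span_base) (simp add: pairing_diff pairing_cscale s1)
    moreover have "cscale (pairing \<gamma> c) \<gamma>1 \<in> cs.span (insert \<gamma>1 ?H)"
      by (intro cs.span_scale cs.span_base) simp
    ultimately show ?thesis using cs.span_add by fastforce
  qed
  then have "cs.dim (insert \<gamma>1 ?H) = cs.dim (UNIV :: ('c \<Rightarrow> complex) set)"
    by (metis UNIV_I cs.dim_span subsetI subset_antisym)
  then have "cs.dim ?H + 1 = CARD('c)"
    using dim_insert cdim_UNIV[where 'i='c] unfolding cdim_def by simp
  then show ?thesis unfolding hyperplane_def csubspace_def cdim_def using sub by simp
qed

section \<open>The adjugate matrix\<close>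

definition adjugate :: "complex^'n^'n \<Rightarrow> complex^'n^'n" where
  "adjugate M = (\<chi> p r. det (\<chi> i k. if i = r then (if k = p then 1 else 0) else M $ i $ k))"

lemma det_replace_row:
  fixes M :: "complex^'n^'n"
  shows "det (\<chi> i k. if i = p then r $ k else M $ i $ k) = (\<Sum>q\<in>UNIV. r $ q * adjugate M $ q $ p)"
proof -
  let ?c = "\<lambda>i. row i M"
  have e: "(\<chi> i k. if i = p then (if k = q then 1 else 0) else M $ i $ k) =
           (\<chi> i. if i = p then axis q 1 else ?c i)" for q
    by (simp add: vec_eq_iff axis_def row_def)
  have r: "(\<Sum>q\<in>UNIV. r $ q *s axis q 1) = r"
    by (simp add: vec_eq_iff axis_def if_distrib cong: if_cong)
  have "(\<Sum>q\<in>UNIV. r $ q * adjugate M $ q $ p)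
      = (\<Sum>q\<in>UNIV. det (\<chi> i. if i = p then r $ q *s axis q 1 else ?c i))"
    by (simp add: adjugate_def e det_row_mul)
  also have "\<dots> = det (\<chi> i. if i = p then (\<Sum>q\<in>UNIV. r $ q *s axis q 1) else ?c i)"
    by (rule det_linear_row_sum[symmetric]) simp
  also have "\<dots> = det (\<chi> i k. if i = p then r $ k else M $ i $ k)"
    unfolding r by (intro arg_cong[where f=det]) (simp add: vec_eq_iff row_def)
  finally show ?thesis by simp
qed

lemma matrix_mul_adjugate: "M ** adjugate M = mat (det M)"
proof -
  have "(M ** adjugate M) $ i $ r = (if i = r then det M else 0)" for i r
  proof -
    have "(M ** adjugate M) $ i $ r = det (\<chi> i' k. if i' = r then row i M $ k else M $ i' $ k)"
      by (simp add: det_replace_row matrix_matrix_mult_def row_def)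
    also have "\<dots> = (if i = r then det M else 0)"
    proof (cases "i = r")
      case True
      then have "(\<chi> i' k. if i' = r then row i M $ k else M $ i' $ k) = M"
        by (simp add: vec_eq_iff row_def)
      then show ?thesis using True by simp
    next
      case False
      show ?thesis
        using det_identical_rows[OF False, of "\<chi> i' k. if i' = r then row i M $ k else M $ i' $ k"]
        by (simp add: False row_def vec_eq_iff)
    qed
    finally show ?thesis .
  qed
  then show ?thesis by (simp add: vec_eq_iff mat_def)
qed

text \<open>\<open>det (M + t I)\<close> is a monic polynomial in \<open>t\<close>, so \<open>M + t I\<close> is invertible for all but finitely
  many \<open>t\<close>; identities between continuous matrix functions then extend from invertible to arbitrary
  matrices.\<close>

definition det_shift_poly :: "complex^'n^'n \<Rightarrow> complex poly" where
  "det_shift_poly M = (\<Sum>p\<in>{p. p permutes (UNIV::'n set)}. of_int (sign p) *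
      (\<Prod>i\<in>UNIV. [: M $ i $ p i, if p i = i then 1 else 0 :]))"

lemma poly_det_shift_poly: "poly (det_shift_poly M) t = det (M + mat t)"
proof -
  have "poly [: M $ i $ p i, if p i = i then 1 else 0 :] t = (M + mat t) $ i $ p i" for p i
    by (cases "p i = i") (auto simp: mat_def)
  then show ?thesis
    unfolding det_shift_poly_def det_def poly_sum poly_mult poly_prod poly_of_int by simp
qed

lemma coeff_det_shift_poly: "coeff (det_shift_poly (M::complex^'n^'n)) CARD('n) = 1"
proof -
  let ?q = "\<lambda>p. (\<Prod>i\<in>UNIV. [: M $ i $ p i, if p i = i then 1 else 0 :] :: complex poly)"
  have c: "coeff (of_int (sign p) * ?q p) CARD('n) = (if p = id then 1 else 0)" for p
  proof (cases "p = id")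
    case True
    have "degree (?q p) = CARD('n)"
      using True by (subst degree_prod_eq_sum_degree) auto
    moreover have "lead_coeff (?q p) = 1" using True by (simp add: lead_coeff_prod)
    ultimately show ?thesis using True by simp
  next
    case False
    then obtain j where j: "p j \<noteq> j" by (metis eq_id_iff)
    have "degree (?q p) \<le> (\<Sum>i\<in>UNIV. degree [: M $ i $ p i, if p i = i then 1 else 0 :])"
      by (rule order_trans[OF degree_prod_sum_le]) auto
    also have "\<dots> = (\<Sum>i\<in>UNIV - {j}. degree [: M $ i $ p i, if p i = i then 1 else 0 :])"
      using j by (subst sum.remove[of _ j]) auto
    also have "\<dots> \<le> (\<Sum>i\<in>UNIV - {j}. 1)"
      by (rule sum_mono) simp
    also have "\<dots> < CARD('n)" by (simp add: card_Diff_singleton)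
    finally have "coeff (?q p) CARD('n) = 0" by (rule coeff_eq_0)
    then show ?thesis using False by (simp add: of_int_poly)
  qed
  have "coeff (det_shift_poly M) CARD('n) = (\<Sum>p\<in>{p. p permutes (UNIV::'n set)}. if p = id then 1 else 0)"
    unfolding det_shift_poly_def coeff_sum by (rule sum.cong) (auto simp: c)
  then show ?thesis by simp
qed

lemma finite_det_add_mat_zeros: "finite {t. det ((M::complex^'n^'n) + mat t) = 0}"
proof -
  have "det_shift_poly M \<noteq> 0" using coeff_det_shift_poly[of M] by auto
  then show ?thesis using poly_roots_finite[of "det_shift_poly M"] by (simp add: poly_det_shift_poly)
qed

lemma tendsto_matrix_mult [tendsto_intros]:
  fixes f :: "'x \<Rightarrow> complex^'n^'m" and g :: "'x \<Rightarrow> complex^'k^'n"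
  assumes "(f \<longlongrightarrow> A) F" and "(g \<longlongrightarrow> B) F"
  shows "((\<lambda>x. f x ** g x) \<longlongrightarrow> A ** B) F"
  unfolding matrix_matrix_mult_def
  by (intro tendsto_vec_lambda tendsto_sum tendsto_mult tendsto_vec_nth assms)

lemma tendsto_transpose [tendsto_intros]:
  fixes f :: "'x \<Rightarrow> complex^'n^'m"
  assumes "(f \<longlongrightarrow> A) F"
  shows "((\<lambda>x. transpose (f x)) \<longlongrightarrow> transpose A) F"
  unfolding transpose_def by (intro tendsto_vec_lambda tendsto_vec_nth assms)

lemma tendsto_mat [tendsto_intros]:
  assumes "(c \<longlongrightarrow> c0) F"
  shows "((\<lambda>x. mat (c x) :: complex^'n^'n) \<longlongrightarrow> mat c0) F"
  unfolding mat_def by (intro tendsto_vec_lambda) (simp add: assms)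

lemma tendsto_det [tendsto_intros]:
  fixes f :: "'x \<Rightarrow> complex^'n^'n"
  assumes "(f \<longlongrightarrow> A) F"
  shows "((\<lambda>x. det (f x)) \<longlongrightarrow> det A) F"
  unfolding det_def by (intro tendsto_sum tendsto_mult tendsto_prod tendsto_const tendsto_vec_nth assms)

lemma tendsto_adjugate [tendsto_intros]:
  fixes f :: "'x \<Rightarrow> complex^'n^'n"
  assumes "(f \<longlongrightarrow> A) F"
  shows "((\<lambda>x. adjugate (f x)) \<longlongrightarrow> adjugate A) F"
proof -
  have h: "((\<lambda>x. \<chi> i k. if i = r then (if k = p then 1 else 0) else f x $ i $ k)
      \<longlongrightarrow> (\<chi> i k. if i = r then (if k = p then 1 else 0) else A $ i $ k)) F" for p r
  proof (intro tendsto_vec_lambda)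
    fix i k
    show "((\<lambda>x. if i = r then (if k = p then 1 else 0) else f x $ i $ k)
        \<longlongrightarrow> (if i = r then (if k = p then 1 else 0) else A $ i $ k)) F"
      by (cases "i = r") (simp_all add: tendsto_vec_nth assms)
  qed
  show ?thesis unfolding adjugate_def by (intro tendsto_vec_lambda) (rule tendsto_det[OF h])
qed

lemma tendsto_limits_eq_off_finite:
  fixes G H :: "'x::{perfect_space, t1_space} \<Rightarrow> 'a::t2_space"
  assumes "(G \<longlongrightarrow> a) (at z)" and "(H \<longlongrightarrow> b) (at z)"
    and "finite S" and "\<And>t. t \<notin> S \<Longrightarrow> G t = H t"
  shows "a = b"
proof -
  have "eventually (\<lambda>t. \<forall>s\<in>S. t \<noteq> s) (at z)"
    using assms(3) by (auto intro: eventually_ball_finite eventually_neq_at_within)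
  then have "eventually (\<lambda>t. G t = H t) (at z)"
    by eventually_elim (use assms(4) in auto)
  then have "(H \<longlongrightarrow> a) (at z)"
    using assms(1) tendsto_cong by metis
  then show ?thesis using assms(2) tendsto_unique[OF at_neq_bot] by blast
qed

lemma mat_matrix_mult_comm: "mat c ** X = X ** mat (c::complex)"
proof -
  have "(\<Sum>k\<in>UNIV. (if i = k then c else 0) * X $ k $ j) = c * X $ i $ j"
    "(\<Sum>k\<in>UNIV. X $ i $ k * (if k = j then c else 0)) = c * X $ i $ j" for i j
    by (simp_all add: mult_ac mult_delta_left mult_delta_right)
  then show ?thesis by (simp add: vec_eq_iff matrix_matrix_mult_def mat_def)
qed

lemma adjugate_matrix_mul_invertible:
  assumes "det (M::complex^'n^'n) \<noteq> 0"
  shows "adjugate M ** M = mat (det M)"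
proof -
  obtain Mi where Mi: "Mi ** M = mat 1" "M ** Mi = mat 1"
    using assms invertible_det_nz unfolding invertible_def by blast
  have "adjugate M ** M = (Mi ** M) ** adjugate M ** M"
    by (simp add: Mi(1))
  also have "\<dots> = Mi ** (mat (det M) ** M)"
    by (simp add: matrix_mul_assoc flip: matrix_mul_adjugate[of M])
  also have "\<dots> = mat (det M)"
    by (metis Mi(1) mat_matrix_mult_comm matrix_mul_assoc matrix_mul_lid)
  finally show ?thesis .
qed

lemma adjugate_matrix_mul: "adjugate M ** M = mat (det (M::complex^'n^'n))"
proof (rule tendsto_limits_eq_off_finite[where S = "{t. det (M + mat t) = 0}"])
  have "((\<lambda>t. M + mat t) \<longlongrightarrow> M + mat 0) (at (0::complex))"
    by (intro tendsto_intros)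
  then have M: "((\<lambda>t. M + mat t) \<longlongrightarrow> M) (at (0::complex))" by simp
  show "((\<lambda>t. adjugate (M + mat t) ** (M + mat t)) \<longlongrightarrow> adjugate M ** M) (at 0)"
    "((\<lambda>t. mat (det (M + mat t))) \<longlongrightarrow> mat (det M)) (at 0)"
    by (intro tendsto_intros M)+
qed (auto intro: finite_det_add_mat_zeros adjugate_matrix_mul_invertible)

definition diag_mat :: "('n \<Rightarrow> complex) \<Rightarrow> complex^'n^'n" where
  "diag_mat d = (\<chi> i j. if i = j then d i else 0)"

lemma diag_mat_mult: "diag_mat d ** diag_mat e = diag_mat (\<lambda>i. d i * e i)"
  by (simp add: vec_eq_iff matrix_matrix_mult_def diag_mat_def mult_delta_left mult_delta_right)

lemma diag_mat_mult_assoc: "diag_mat d ** (diag_mat e ** Z) = diag_mat (\<lambda>i. d i * e i) ** Z"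
  by (simp add: matrix_mul_assoc diag_mat_mult)

lemma diag_mat_const: "diag_mat (\<lambda>_. c) = mat c"
  by (simp add: diag_mat_def mat_def)

lemma diag_mat_product_entry:
  "(B ** diag_mat d ** transpose C) $ j $ j' = (\<Sum>p\<in>UNIV. B $ j $ p * d p * C $ j' $ p)"
  by (simp add: matrix_matrix_mult_def diag_mat_def transpose_def mult_delta_right)

text \<open>For invertible \<open>X2 = B diag d2 C\<^sup>T\<close>, \<open>adjugate X2 = det X2 \<cdot> C\<^sup>-\<^sup>T diag (1/d2) B\<^sup>-\<^sup>1\<close>, so both
  sides equal \<open>det X2 \<cdot> B diag (d1 d3 / d2) C\<^sup>T\<close>.\<close>

lemma strassen_equation_invertible:
  fixes B C :: "complex^'n^'n"
  assumes B: "det B \<noteq> 0" and C: "det C \<noteq> 0" and d2: "\<And>i. d2 i \<noteq> 0"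
  shows "(B ** diag_mat d1 ** transpose C) ** adjugate (B ** diag_mat d2 ** transpose C) ** (B ** diag_mat d3 ** transpose C)
       = (B ** diag_mat d3 ** transpose C) ** adjugate (B ** diag_mat d2 ** transpose C) ** (B ** diag_mat d1 ** transpose C)"
proof -
  obtain Bi where Bi: "Bi ** B = mat 1"
    using B invertible_det_nz invertible_left_inverse by blast
  obtain Ci where Ci: "Ci ** transpose C = mat 1" "transpose C ** Ci = mat 1"
    using C invertible_det_nz[of "transpose C"] invertible_left_inverse matrix_left_right_inverse
    by (metis det_transpose)
  define X2 where "X2 = B ** diag_mat d2 ** transpose C"
  define e where "e = (\<lambda>i. inverse (d2 i))"
  define Y where "Y = Ci ** (diag_mat e ** Bi)"
  have de: "diag_mat e ** diag_mat d2 = mat 1"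
    using d2 by (simp add: diag_mat_mult e_def flip: diag_mat_const)
  have "Y ** X2 = Ci ** (diag_mat e ** ((Bi ** B) ** diag_mat d2)) ** transpose C"
    by (simp add: Y_def X2_def matrix_mul_assoc)
  also have "\<dots> = mat 1"
    by (simp add: Bi matrix_mul_assoc de Ci)
  finally have YX: "Y ** X2 = mat 1" .
  have adjX: "adjugate X2 = mat (det X2) ** Y"
  proof -
    have "adjugate X2 = (Y ** X2) ** adjugate X2" by (simp add: YX)
    also have "\<dots> = Y ** mat (det X2)" by (simp add: matrix_mul_assoc[symmetric] matrix_mul_adjugate)
    finally show ?thesis by (simp add: mat_matrix_mult_comm)
  qed
  have mat_pull: "A ** (mat c ** Z) = mat c ** (A ** Z)" for A Z :: "complex^'n^'n" and c
    by (metis mat_matrix_mult_comm matrix_mul_assoc)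
  have cancel: "Bi ** (B ** Z) = Z" "transpose C ** (Ci ** Z) = Z" for Z :: "complex^'n^'n"
    by (simp_all add: matrix_mul_assoc Bi Ci)
  have "(B ** diag_mat da ** transpose C) ** adjugate X2 ** (B ** diag_mat db ** transpose C)
      = mat (det X2) ** (B ** (diag_mat (\<lambda>i. da i * (e i * db i)) ** transpose C))" for da db
    unfolding adjX Y_def
    by (simp add: matrix_mul_assoc[symmetric] mat_pull cancel diag_mat_mult_assoc mult.assoc)
  then show ?thesis unfolding X2_def[symmetric] by (simp add: mult_ac)
qed

lemma strassen_equation_diag:
  fixes B C :: "complex^'n^'n"
  shows "(B ** diag_mat d1 ** transpose C) ** adjugate (B ** diag_mat d2 ** transpose C) ** (B ** diag_mat d3 ** transpose C)
       = (B ** diag_mat d3 ** transpose C) ** adjugate (B ** diag_mat d2 ** transpose C) ** (B ** diag_mat d1 ** transpose C)"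
    (is "?X d1 ** adjugate (?X d2) ** ?X d3 = ?X d3 ** adjugate (?X d2) ** ?X d1")
proof -
  let ?Xt = "\<lambda>t d. (B + mat t) ** diag_mat d ** transpose (C + mat t)"
  let ?d2t = "\<lambda>t i. d2 i + t"
  have lim_shift: "((\<lambda>t. M + mat t) \<longlongrightarrow> M) (at (0::complex))" for M :: "complex^'n^'n"
    using tendsto_add[OF tendsto_const tendsto_mat[OF tendsto_ident_at], of M 0] by simp
  have lim_diag: "((\<lambda>t. diag_mat (?d2t t)) \<longlongrightarrow> diag_mat d2) (at (0::complex))"
    unfolding diag_mat_def
  proof (intro tendsto_vec_lambda)
    fix i j
    have "((\<lambda>t. d2 i + t) \<longlongrightarrow> d2 i) (at (0::complex))"
      using tendsto_add[OF tendsto_const tendsto_ident_at, of "d2 i" 0 UNIV] by simp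
    then show "((\<lambda>t. if i = j then d2 i + t else 0) \<longlongrightarrow> (if i = j then d2 i else 0)) (at 0)"
      by (cases "i = j") simp_all
  qed
  have lim_X: "((\<lambda>t. ?Xt t d) \<longlongrightarrow> ?X d) (at 0)" for d
    by (intro tendsto_intros lim_shift)
  have lim_X2: "((\<lambda>t. ?Xt t (?d2t t)) \<longlongrightarrow> ?X d2) (at 0)"
    by (intro tendsto_intros lim_shift lim_diag)
  show ?thesis
  proof (rule tendsto_limits_eq_off_finite)
    show "((\<lambda>t. ?Xt t d1 ** adjugate (?Xt t (?d2t t)) ** ?Xt t d3) \<longlongrightarrow> ?X d1 ** adjugate (?X d2) ** ?X d3) (at 0)"
      "((\<lambda>t. ?Xt t d3 ** adjugate (?Xt t (?d2t t)) ** ?Xt t d1) \<longlongrightarrow> ?X d3 ** adjugate (?X d2) ** ?X d1) (at 0)"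
      by (intro tendsto_intros lim_X lim_X2)+
    show "finite ({t. det (B + mat t) = 0} \<union> {t. det (C + mat t) = 0} \<union> range (\<lambda>i. - d2 i))"
      by (simp add: finite_det_add_mat_zeros)
  next
    fix t assume "t \<notin> {t. det (B + mat t) = 0} \<union> {t. det (C + mat t) = 0} \<union> range (\<lambda>i. - d2 i)"
    then show "?Xt t d1 ** adjugate (?Xt t (?d2t t)) ** ?Xt t d3 = ?Xt t d3 ** adjugate (?Xt t (?d2t t)) ** ?Xt t d1"
      by (intro strassen_equation_invertible) (auto simp: add_eq_0_iff)
  qed
qed

section \<open>Strassen's equations for border rank at most b\<close>

text \<open>The matrix of \<open>phi T \<alpha>\<close>, with the basis of \<open>C\<close> re-indexed by \<open>B\<close> through \<open>g\<close>.\<close>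

definition slice_matrix :: "('a::finite,'b::finite,'c::finite) tensor \<Rightarrow> ('b \<Rightarrow> 'c)
    \<Rightarrow> ('a \<Rightarrow> complex) \<Rightarrow> complex^'b^'b" where
  "slice_matrix T g \<alpha> = (\<chi> j j'. \<Sum>i\<in>UNIV. \<alpha> i * T i j (g j'))"

lemma slice_matrix_sum_rank_one:
  fixes a :: "nat \<Rightarrow> 'a::finite \<Rightarrow> complex" and b :: "nat \<Rightarrow> 'b::finite \<Rightarrow> complex"
    and c :: "nat \<Rightarrow> 'c::finite \<Rightarrow> complex"
  obtains B C :: "complex^'b^'b" and d where
    "\<And>\<alpha>. slice_matrix (sum_rank_one CARD('b) a b c) g \<alpha> = B ** diag_mat (d \<alpha>) ** transpose C"
proof -
  obtain h :: "'b \<Rightarrow> nat" where h: "bij_betw h UNIV {..<CARD('b)}"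
    using ex_bij_betw_finite_nat[of "UNIV :: 'b set"] lessThan_atLeast0 by auto
  define B :: "complex^'b^'b" where "B = (\<chi> j p. b (h p) j)"
  define C :: "complex^'b^'b" where "C = (\<chi> j' p. c (h p) (g j'))"
  define d where "d = (\<lambda>\<alpha> p. \<Sum>i\<in>UNIV. \<alpha> i * a (h p) i)"
  have "slice_matrix (sum_rank_one CARD('b) a b c) g \<alpha> $ j $ j'
      = (B ** diag_mat (d \<alpha>) ** transpose C) $ j $ j'" for \<alpha> j j'
  proof -
    have "slice_matrix (sum_rank_one CARD('b) a b c) g \<alpha> $ j $ j'
        = (\<Sum>i\<in>UNIV. \<Sum>l<CARD('b). \<alpha> i * a l i * b l j * c l (g j'))"
      by (simp add: slice_matrix_def sum_rank_one_def sum_distrib_left mult.assoc)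
    also have "\<dots> = (\<Sum>l<CARD('b). (\<Sum>i\<in>UNIV. \<alpha> i * a l i) * b l j * c l (g j'))"
      by (subst sum.swap) (simp add: sum_distrib_right)
    also have "\<dots> = (\<Sum>p\<in>UNIV. (\<Sum>i\<in>UNIV. \<alpha> i * a (h p) i) * b (h p) j * c (h p) (g j'))"
      by (rule sum.reindex_bij_betw[OF h, symmetric])
    also have "\<dots> = (B ** diag_mat (d \<alpha>) ** transpose C) $ j $ j'"
      by (simp add: diag_mat_product_entry B_def C_def d_def mult_ac)
    finally show ?thesis .
  qed
  then show ?thesis by (intro that[of B d C]) (simp add: vec_eq_iff)
qed

lemma strassen_equation_sum_rank_one:
  fixes a :: "nat \<Rightarrow> 'a::finite \<Rightarrow> complex" and b :: "nat \<Rightarrow> 'b::finite \<Rightarrow> complex"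
    and c :: "nat \<Rightarrow> 'c::finite \<Rightarrow> complex" and g :: "'b \<Rightarrow> 'c"
  defines "M \<equiv> slice_matrix (sum_rank_one CARD('b) a b c) g"
  shows "M \<alpha>1 ** adjugate (M \<alpha>2) ** M \<alpha>3 = M \<alpha>3 ** adjugate (M \<alpha>2) ** M \<alpha>1"
proof -
  obtain B C :: "complex^'b^'b" and d where M: "\<And>\<alpha>. M \<alpha> = B ** diag_mat (d \<alpha>) ** transpose C"
    unfolding M_def using slice_matrix_sum_rank_one[of a b c g] by metis
  show ?thesis unfolding M by (rule strassen_equation_diag)
qed

lemma tendsto_slice_matrix:
  assumes "\<And>i j k. ((\<lambda>n. Tn n i j k) \<longlongrightarrow> T i j k) F"
  shows "((\<lambda>n. slice_matrix (Tn n) g \<alpha>) \<longlongrightarrow> slice_matrix T g \<alpha>) F"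
  unfolding slice_matrix_def
  by (intro tendsto_vec_lambda tendsto_sum tendsto_mult tendsto_const assms)

lemma strassen_equation_border_rank:
  fixes T :: "('a::finite,'b::finite,'c::finite) tensor" and g :: "'b \<Rightarrow> 'c"
  assumes "border_rank_le T CARD('b)"
  defines "M \<equiv> slice_matrix T g"
  shows "M \<alpha>1 ** adjugate (M \<alpha>2) ** M \<alpha>3 = M \<alpha>3 ** adjugate (M \<alpha>2) ** M \<alpha>1"
proof -
  obtain a b c where lim: "\<And>i j k. (\<lambda>n. sum_rank_one CARD('b) (a n) (b n) (c n) i j k) \<longlonglongrightarrow> T i j k"
    using assms(1) unfolding border_rank_le_def by blast
  define Mn where "Mn n = slice_matrix (sum_rank_one CARD('b) (a n) (b n) (c n)) g" for n
  have lim_M: "(\<lambda>n. Mn n \<alpha> ** adjugate (Mn n \<alpha>2) ** Mn n \<alpha>') \<longlonglongrightarrow> M \<alpha> ** adjugate (M \<alpha>2) ** M \<alpha>'"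
    for \<alpha> \<alpha>'
    unfolding Mn_def M_def
    by (intro tendsto_matrix_mult tendsto_adjugate tendsto_slice_matrix lim)
  have "Mn n \<alpha>3 ** adjugate (Mn n \<alpha>2) ** Mn n \<alpha>1 = Mn n \<alpha>1 ** adjugate (Mn n \<alpha>2) ** Mn n \<alpha>3"
    for n unfolding Mn_def by (rule strassen_equation_sum_rank_one)
  then have "(\<lambda>n. Mn n \<alpha>1 ** adjugate (Mn n \<alpha>2) ** Mn n \<alpha>3) \<longlonglongrightarrow> M \<alpha>3 ** adjugate (M \<alpha>2) ** M \<alpha>1"
    using lim_M[of \<alpha>3 \<alpha>1] by simp
  then show ?thesis by (rule LIMSEQ_unique[OF lim_M])
qed

lemma border_rank_le_border_rank:
  fixes T :: "('a::finite,'b::finite,'c::finite) tensor"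
  shows "border_rank_le T (border_rank T)"
proof -
  let ?N = "CARD('a \<times> 'b \<times> 'c)"
  obtain u :: "nat \<Rightarrow> 'a \<times> 'b \<times> 'c" where u: "bij_betw u {..<?N} UNIV"
    using ex_bij_betw_nat_finite[of "UNIV :: ('a \<times> 'b \<times> 'c) set"] lessThan_atLeast0 by auto
  define a where "a l = cscale (case u l of (i, j, k) \<Rightarrow> T i j k) (unit_vec (fst (u l)))" for l
  define b where "b l = unit_vec (fst (snd (u l)))" for l
  define c where "c l = unit_vec (snd (snd (u l)))" for l
  have "sum_rank_one ?N a b c i j k = T i j k" for i j k
  proof -
    have "sum_rank_one ?N a b c i j k = (\<Sum>l<?N. if u l = (i, j, k) then T i j k else 0)"
      unfolding sum_rank_one_def by (intro sum.cong) (auto simp: sum_rank_one_def a_def b_def c_def unit_vec_def split: prod.split)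
    also have "\<dots> = (\<Sum>t\<in>UNIV. if t = (i, j, k) then T i j k else 0)"
      by (rule sum.reindex_bij_betw[OF u])
    finally show ?thesis by simp
  qed
  then have "border_rank_le T ?N"
    unfolding border_rank_le_def by (intro exI[of _ "\<lambda>_. a"] exI[of _ "\<lambda>_. b"] exI[of _ "\<lambda>_. c"]) simp
  then show ?thesis
    unfolding border_rank_def by (rule LeastI)
qed

section \<open>Slices of corank one\<close>

definition linear_map_of :: "('j \<Rightarrow> 'k::finite \<Rightarrow> complex) \<Rightarrow> ('k \<Rightarrow> complex) \<Rightarrow> 'j \<Rightarrow> complex" where
  "linear_map_of K \<gamma> = (\<lambda>j. \<Sum>k\<in>UNIV. K j k * \<gamma> k)"

lemma inj_linear_map_of_iff_det:
  fixes K :: "'b::finite \<Rightarrow> 'c::finite \<Rightarrow> complex" and g :: "'b \<Rightarrow> 'c"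
  assumes g: "bij g"
  shows "inj (linear_map_of K) \<longleftrightarrow> det (\<chi> j j'. K j (g j')) \<noteq> 0"
proof -
  let ?Q = "\<chi> j j'. K j (g j') :: complex^'b^'b"
  let ?v = "\<lambda>\<gamma>. \<chi> j'. \<gamma> (g j')"
  have map: "linear_map_of K \<gamma> = vec_nth (?Q *v ?v \<gamma>)" for \<gamma>
  proof
    fix j
    have "linear_map_of K \<gamma> j = (\<Sum>j'\<in>UNIV. K j (g j') * \<gamma> (g j'))"
      unfolding linear_map_of_def by (rule sum.reindex_bij_betw[OF g, symmetric])
    then show "linear_map_of K \<gamma> j = (?Q *v ?v \<gamma>) $ j"
      by (simp add: matrix_vector_mult_def)
  qed
  have v_inv: "?v (\<lambda>k. x $ inv g k) = x" for x :: "complex^'b"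
    using g by (simp add: vec_eq_iff bij_is_inj)
  have v_inj: "\<gamma> = \<gamma>'" if "?v \<gamma> = ?v \<gamma>'" for \<gamma> \<gamma>' :: "'c \<Rightarrow> complex"
  proof
    fix k
    obtain j where "k = g j" using g by (metis bij_pointE)
    then show "\<gamma> k = \<gamma>' k" using that by (simp add: vec_eq_iff)
  qed
  have "inj (linear_map_of K) \<longleftrightarrow> inj ((*v) ?Q)"
  proof
    assume L: "inj (linear_map_of K)"
    show "inj ((*v) ?Q)"
    proof (rule injI)
      fix x y assume "?Q *v x = ?Q *v y"
      then have "linear_map_of K (\<lambda>k. x $ inv g k) = linear_map_of K (\<lambda>k. y $ inv g k)"
        by (simp add: map v_inv)
      then have "(\<lambda>k. x $ inv g k) = (\<lambda>k. y $ inv g k)" by (rule injD[OF L])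
      then have "?v (\<lambda>k. x $ inv g k) = ?v (\<lambda>k. y $ inv g k)" by (rule arg_cong)
      then show "x = y" by (simp only: v_inv)
    qed
  next
    assume Q: "inj ((*v) ?Q)"
    show "inj (linear_map_of K)"
    proof (rule injI)
      fix \<gamma> \<gamma>' assume "linear_map_of K \<gamma> = linear_map_of K \<gamma>'"
      then have "?Q *v ?v \<gamma> = ?Q *v ?v \<gamma>'" by (simp add: map vec_nth_inject)
      then have "?v \<gamma> = ?v \<gamma>'" by (rule injD[OF Q])
      then show "\<gamma> = \<gamma>'" by (rule v_inj)
    qed
  qed
  also have "\<dots> \<longleftrightarrow> det ?Q \<noteq> 0"
    using det_nz_iff_inj_gen[OF matrix_vector_mul_linear_gen[of ?Q]] by simp
  finally show ?thesis .
qed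

lemma phiT_eq_linear_map_of: "phiT T \<alpha> = linear_map_of (\<lambda>j k. \<Sum>i\<in>UNIV. \<alpha> i * T i j k)"
  unfolding phiT_def linear_map_of_def fun_eq_iff
  by (subst sum.swap) (simp add: sum_distrib_left mult_ac)

lemma inj_phiT_iff_det_slice_matrix:
  fixes T :: "('a::finite,'b::finite,'c::finite) tensor"
  assumes "bij g"
  shows "inj (phiT T \<alpha>) \<longleftrightarrow> det (slice_matrix T g \<alpha>) \<noteq> 0"
  unfolding phiT_eq_linear_map_of inj_linear_map_of_iff_det[OF assms] slice_matrix_def ..

lemma ext_bij:
  assumes "bij (g::'b \<Rightarrow> 'c)" and "\<And>j. F (g j) = G (g j)"
  shows "F = G"
proof
  fix k
  obtain j where "k = g j" using assms(1) by (metis bij_pointE)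
  then show "F k = G k" using assms(2) by simp
qed

lemma phi_slice_matrix: "phi T \<alpha> \<beta> (g j') = (\<Sum>j\<in>UNIV. \<beta> j * slice_matrix T g \<alpha> $ j $ j')"
  unfolding phi_def slice_matrix_def
  by (subst sum.swap) (simp add: sum_distrib_left mult_ac)

lemma pairing_phiT: "pairing v (phiT T \<alpha> \<gamma>) = pairing \<gamma> (phi T \<alpha> v)"
proof -
  have "pairing v (phiT T \<alpha> \<gamma>) = (\<Sum>j\<in>UNIV. \<Sum>i\<in>UNIV. \<Sum>k\<in>UNIV. \<alpha> i * v j * \<gamma> k * T i j k)"
    by (simp add: pairing_def phiT_def sum_distrib_left mult_ac)
  also have "\<dots> = (\<Sum>i\<in>UNIV. \<Sum>j\<in>UNIV. \<Sum>k\<in>UNIV. \<alpha> i * v j * \<gamma> k * T i j k)"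
    by (rule sum.swap)
  also have "\<dots> = (\<Sum>i\<in>UNIV. \<Sum>k\<in>UNIV. \<Sum>j\<in>UNIV. \<alpha> i * v j * \<gamma> k * T i j k)"
    by (intro sum.cong refl sum.swap)
  also have "\<dots> = (\<Sum>k\<in>UNIV. \<Sum>i\<in>UNIV. \<Sum>j\<in>UNIV. \<alpha> i * v j * \<gamma> k * T i j k)"
    by (rule sum.swap)
  also have "\<dots> = pairing \<gamma> (phi T \<alpha> v)"
    by (simp add: pairing_def phi_def sum_distrib_left mult_ac)
  finally show ?thesis .
qed

lemma phi_add_left: "phi T (\<alpha> + \<alpha>') \<beta> = phi T \<alpha> \<beta> + phi T \<alpha>' \<beta>"
  by (simp add: phi_def fun_eq_iff algebra_simps sum.distrib)

lemma phi_cscale_left: "phi T (cscale t \<alpha>) \<beta> = cscale t (phi T \<alpha> \<beta>)"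
  by (simp add: phi_def fun_eq_iff sum_distrib_left mult_ac)

lemma phiT_add_left: "phiT T (\<alpha> + \<alpha>') \<gamma> = phiT T \<alpha> \<gamma> + phiT T \<alpha>' \<gamma>"
  by (simp add: phiT_def fun_eq_iff algebra_simps sum.distrib)

lemma phi_unit_vec: "phi T (unit_vec i) \<beta> k = (\<Sum>j\<in>UNIV. \<beta> j * T i j k)"
  unfolding phi_def by (simp add: mult.assoc flip: sum_distrib_left)

lemma phiT_unit_vec: "phiT T (unit_vec i) \<gamma> j = (\<Sum>k\<in>UNIV. \<gamma> k * T i j k)"
  unfolding phiT_def by (simp add: mult.assoc flip: sum_distrib_left)

lemma phi_vec_nth: "phi T \<alpha> (vec_nth x) (g j') = (x v* slice_matrix T g \<alpha>) $ j'"
  by (simp add: phi_slice_matrix vector_matrix_mult_def mult.commute)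

lemma det_eq_0_left_kernel:
  assumes "det (A::complex^'n^'n) = 0"
  obtains x where "x \<noteq> 0" "x v* A = 0"
proof -
  have "\<not> inj ((*v) (transpose A))"
    using det_nz_iff_inj_gen[OF matrix_vector_mul_linear_gen[of "transpose A"]] assms by simp
  then obtain x y where "x \<noteq> y" "transpose A *v x = transpose A *v y" unfolding inj_def by blast
  then show ?thesis
    by (intro that[of "x - y"]) (simp_all add: vector_matrix_mult_diff_distrib)
qed

lemma lrank_phi_if_det_slice_matrix_ne_0:
  fixes T :: "('a::finite,'b::finite,'c::finite) tensor"
  assumes g: "bij g" and d: "det (slice_matrix T g \<alpha>) \<noteq> 0"
  shows "lrank (phi T \<alpha>) = CARD('c)"
proof -
  have "\<gamma> \<in> range (phi T \<alpha>)" for \<gamma> :: "'c \<Rightarrow> complex"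
  proof -
    obtain Mi where "Mi ** slice_matrix T g \<alpha> = mat 1"
      using d invertible_det_nz invertible_left_inverse by blast
    then have x: "((\<chi> j'. \<gamma> (g j')) v* Mi) v* slice_matrix T g \<alpha> = (\<chi> j'. \<gamma> (g j'))"
      by (simp add: vector_matrix_mul_assoc)
    have "phi T \<alpha> (vec_nth ((\<chi> j'. \<gamma> (g j')) v* Mi)) = \<gamma>"
      by (rule ext_bij[OF g]) (simp add: phi_vec_nth x)
    then show ?thesis by (metis rangeI)
  qed
  then have "range (phi T \<alpha>) = UNIV" by auto
  then show ?thesis unfolding lrank_def rank_on_def using cdim_UNIV by simp
qed

lemma det_slice_matrix_eq_0_if_lrank_less:
  fixes T :: "('a::finite,'b::finite,'c::finite) tensor"
  assumes g: "bij g" and "lrank (phi T \<alpha>) < CARD('c)"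
  shows "det (slice_matrix T g \<alpha>) = 0"
  using lrank_phi_if_det_slice_matrix_ne_0[OF g, of T \<alpha>] assms(2) by linarith

lemma vector_matrix_mult_replace_row:
  fixes M :: "complex^'n^'m"
  shows "y v* (\<chi> i k. if i = p then r $ k else M $ i $ k)
       = y $ p *s r + (\<chi> j. if j = p then 0 else y $ j) v* M"
proof -
  have "(\<Sum>i\<in>UNIV. y $ i * (if i = p then r $ k else M $ i $ k))
      = (\<Sum>i\<in>UNIV. (if i = p then y $ p * r $ k else 0) + (if i = p then 0 else y $ i) * M $ i $ k)" for k
    by (intro sum.cong) auto
  then show ?thesis
    by (simp add: vec_eq_iff vector_matrix_mult_def sum.distrib)
qed

text \<open>If the adjugate vanished, replacing a row \<open>p\<close> on which the left kernel vector is nonzero by a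
  vector outside the image would leave the matrix singular; a left kernel vector of the new matrix
  is either a kernel vector of \<open>phi T \<alpha>\<close> vanishing at \<open>p\<close> or exhibits a preimage.\<close>

lemma adjugate_slice_matrix_ne_0:
  fixes T :: "('a::finite,'b::finite,'c::finite) tensor"
  assumes g: "bij g" and card: "CARD('b) = CARD('c)"
    and corank: "cdim (range (phi T \<alpha>)) + 1 = CARD('b)"
    and d: "det (slice_matrix T g \<alpha>) = 0"
  shows "adjugate (slice_matrix T g \<alpha>) \<noteq> 0"
proof
  let ?M = "slice_matrix T g \<alpha>"
  let ?f = "phi T \<alpha>"
  interpret lf: Vector_Spaces.linear cscale cscale ?f by (rule linear_phi)
  assume adj0: "adjugate ?M = 0"
  obtain x where x: "x \<noteq> 0" "x v* ?M = 0" using det_eq_0_left_kernel[OF d] .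
  have fx: "?f (vec_nth x) = 0"
    by (rule ext_bij[OF g]) (simp add: phi_vec_nth x(2))
  obtain p where xp: "x $ p \<noteq> 0" using x(1) by (auto simp: vec_eq_iff)
  have kernel_p: "c = 0" if fc: "?f c = 0" and cp: "c p = 0" for c
  proof -
    have "vec_nth x \<noteq> 0" using xp by auto
    then obtain s where "c = cscale s (vec_nth x)"
      using kernel_collinear_if_corank_one[OF linear_phi corank fc fx] by blast
    then show ?thesis using cp xp by (auto simp: fun_eq_iff)
  qed
  have "range ?f \<noteq> UNIV"
    using corank card cdim_UNIV[where 'i='c] by auto
  then obtain \<gamma> where \<gamma>: "\<gamma> \<notin> range ?f" by blast
  define r where "r = (\<chi> j'. \<gamma> (g j'))"
  define M' where "M' = (\<chi> i k. if i = p then r $ k else ?M $ i $ k)"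
  have "det M' = 0"
    using det_replace_row[of p r ?M] adj0 by (simp add: M'_def)
  then obtain y where y: "y \<noteq> 0" "y v* M' = 0" by (rule det_eq_0_left_kernel)
  define c where "c = (\<lambda>j. if j = p then 0 else y $ j)"
  have c_vec: "vec_nth (\<chi> j. c j) = c" by (simp add: fun_eq_iff)
  have fc: "phi T \<alpha> c (g j) = ((\<chi> j. c j) v* ?M) $ j" for j
    using phi_vec_nth[of T \<alpha> "\<chi> j. c j" g j] unfolding c_vec .
  have "y v* M' = y $ p *s r + (\<chi> j. c j) v* ?M"
    by (simp add: M'_def vector_matrix_mult_replace_row c_def)
  then have "y $ p * \<gamma> (g j) + ?f c (g j) = 0" for j
    using y(2) by (simp add: vec_eq_iff r_def fc)
  then have eq: "?f c + cscale (y $ p) \<gamma> = 0"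
    by (intro ext_bij[OF g]) (simp add: add.commute)
  show False
  proof (cases "y $ p = 0")
    case True
    then have "c = 0" using eq by (intro kernel_p) (simp_all add: c_def)
    then show False using y(1) True by (auto simp: vec_eq_iff c_def fun_eq_iff split: if_splits)
  next
    case False
    have "?f c k = - (y $ p * \<gamma> k)" for k
      using fun_cong[OF eq, of k] by (simp add: eq_neg_iff_add_eq_0)
    then have "cscale (- inverse (y $ p)) (?f c) = \<gamma>"
      using False by (simp add: fun_eq_iff)
    then have "?f (cscale (- inverse (y $ p)) c) = \<gamma>" by (simp only: lf.scale)
    then show False using \<gamma> by blast
  qed
qed

lemma adjugate_slice_matrix_rank_one:
  fixes T :: "('a::finite,'b::finite,'c::finite) tensor"
  assumes g: "bij g"
    and corank: "cdim (range (phi T \<alpha>)) + 1 = CARD('b)"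
    and d: "det (slice_matrix T g \<alpha>) = 0"
    and adj: "adjugate (slice_matrix T g \<alpha>) \<noteq> 0"
  obtains v a where "v \<noteq> 0" "a \<noteq> 0"
    "\<And>q j. adjugate (slice_matrix T g \<alpha>) $ q $ j = a q * v j"
proof -
  let ?A = "adjugate (slice_matrix T g \<alpha>)"
  have rows: "phi T \<alpha> (vec_nth (?A $ q)) = 0" for q
  proof -
    have "(?A $ q) v* slice_matrix T g \<alpha> = (?A ** slice_matrix T g \<alpha>) $ q"
      by (simp add: vec_eq_iff vector_matrix_mult_def matrix_matrix_mult_def mult.commute)
    also have "\<dots> = 0" using d by (simp add: adjugate_matrix_mul)
    finally show ?thesis by (intro ext_bij[OF g]) (simp add: phi_vec_nth)
  qed
  obtain q0 j0 where q0: "?A $ q0 $ j0 \<noteq> 0" using adj by (auto simp: vec_eq_iff)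
  define v where "v = vec_nth (?A $ q0)"
  have v: "v \<noteq> 0" using q0 by (auto simp: v_def fun_eq_iff)
  have "\<exists>s. vec_nth (?A $ q) = cscale s v" for q
    using kernel_collinear_if_corank_one[OF linear_phi corank rows] rows v v_def by blast
  then obtain a where a: "\<And>q. vec_nth (?A $ q) = cscale (a q) v" by metis
  have A: "?A $ q $ j = a q * v j" for q j
    using fun_cong[OF a[of q], of j] by simp
  moreover have "a \<noteq> 0"
    using A q0 by auto
  ultimately show ?thesis using that v by blast
qed

section \<open>The images of a kernel vector are collinear\<close>

lemma phiT_slice_matrix:
  assumes g: "bij g"
  shows "phiT T \<alpha> \<gamma> j = (\<Sum>j'\<in>UNIV. slice_matrix T g \<alpha> $ j $ j' * \<gamma> (g j'))"
proof -
  have "phiT T \<alpha> \<gamma> j = (\<Sum>k\<in>UNIV. \<Sum>i\<in>UNIV. \<alpha> i * \<gamma> k * T i j k)"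
    unfolding phiT_def by (rule sum.swap)
  also have "\<dots> = (\<Sum>j'\<in>UNIV. \<Sum>i\<in>UNIV. \<alpha> i * \<gamma> (g j') * T i j (g j'))"
    by (rule sum.reindex_bij_betw[OF g, symmetric])
  also have "\<dots> = (\<Sum>j'\<in>UNIV. slice_matrix T g \<alpha> $ j $ j' * \<gamma> (g j'))"
    by (simp add: slice_matrix_def sum_distrib_left mult_ac)
  finally show ?thesis .
qed

lemma concise_phi_ne_0:
  assumes "concise T" and "v \<noteq> 0"
  obtains \<alpha> where "phi T \<alpha> v \<noteq> 0"
proof (rule ccontr)
  assume "\<not> thesis"
  then have "phi T \<alpha> v = 0" for \<alpha> using that by blast
  then have h: "(\<Sum>j\<in>UNIV. v j * T i j k) = 0" for i k
    using phi_unit_vec[of T i v k] by simp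
  have "inj (\<lambda>\<beta>. \<lambda>i k. \<Sum>j\<in>UNIV. \<beta> j * T i j k)"
    using assms(1) unfolding concise_def by blast
  then have "v = 0" by (rule injD) (simp add: fun_eq_iff h)
  then show False using assms(2) by simp
qed

lemma concise_phiT_ne_0:
  assumes "concise T" and "\<gamma> \<noteq> 0"
  obtains \<alpha> where "phiT T \<alpha> \<gamma> \<noteq> 0"
proof (rule ccontr)
  assume "\<not> thesis"
  then have "phiT T \<alpha> \<gamma> = 0" for \<alpha> using that by blast
  then have h: "(\<Sum>k\<in>UNIV. \<gamma> k * T i j k) = 0" for i j
    using phiT_unit_vec[of T i \<gamma> j] by simp
  have "inj (\<lambda>\<gamma>. \<lambda>i j. \<Sum>k\<in>UNIV. \<gamma> k * T i j k)"
    using assms(1) unfolding concise_def by blast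
  then have "\<gamma> = 0" by (rule injD) (simp add: fun_eq_iff h)
  then show False using assms(2) by simp
qed

lemma symmetric_products_collinear:
  fixes P :: "('a \<Rightarrow> complex) \<Rightarrow> 'j \<Rightarrow> complex" and Q :: "('a \<Rightarrow> complex) \<Rightarrow> 'k \<Rightarrow> complex"
  assumes sym: "\<And>\<alpha> \<beta> j k. P \<alpha> j * Q \<beta> k = P \<beta> j * Q \<alpha> k"
    and P_add: "\<And>\<alpha> \<beta>. P (\<alpha> + \<beta>) = P \<alpha> + P \<beta>"
    and Q_add: "\<And>\<alpha> \<beta>. Q (\<alpha> + \<beta>) = Q \<alpha> + Q \<beta>"
    and P_ne_0: "P \<alpha>p \<noteq> 0" and Q_ne_0: "Q \<alpha>q \<noteq> 0"
  obtains c0 x where "c0 \<noteq> 0" "x \<noteq> 0" "\<And>\<alpha>. Q \<alpha> = cscale (x \<alpha>) c0"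
proof -
  obtain \<alpha>1 where P1: "P \<alpha>1 \<noteq> 0" and Q1: "Q \<alpha>1 \<noteq> 0"
  proof (cases "P \<alpha>q \<noteq> 0 \<or> Q \<alpha>p \<noteq> 0")
    case True
    then show ?thesis using that P_ne_0 Q_ne_0 by blast
  next
    case False
    then show ?thesis
      using that[of "\<alpha>q + \<alpha>p"] P_ne_0 Q_ne_0 by (simp add: P_add Q_add)
  qed
  obtain j1 where j1: "P \<alpha>1 j1 \<noteq> 0" using P1 by (auto simp: fun_eq_iff)
  define x where "x \<alpha> = P \<alpha> j1 / P \<alpha>1 j1" for \<alpha>
  have Qx: "Q \<alpha> = cscale (x \<alpha>) (Q \<alpha>1)" for \<alpha>
  proof
    fix k
    show "Q \<alpha> k = cscale (x \<alpha>) (Q \<alpha>1) k"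
      using sym[of \<alpha> j1 \<alpha>1 k] j1 by (simp add: x_def field_simps)
  qed
  have "x \<alpha>1 \<noteq> 0" using j1 by (simp add: x_def)
  then have "x \<noteq> 0" by auto
  then show ?thesis using that[OF Q1 _ Qx] by blast
qed

text \<open>With \<open>adjugate (M \<alpha>0) = a v\<^sup>T\<close>, the entries of Strassen's equation for \<open>\<alpha>, \<alpha>0, \<beta>\<close> are
  \<open>phiT T \<alpha> a \<cdot> phi T \<beta> v\<close> (up to re-indexing by \<open>g\<close>).\<close>

lemma border_rank_kernel_line:
  fixes T :: "('a::finite,'b::finite,'c::finite) tensor" and g :: "'b \<Rightarrow> 'c"
  assumes br: "border_rank_le T CARD('b)" and g: "bij g" and card: "CARD('b) = CARD('c)"
    and conc: "concise T"
    and corank: "cdim (range (phi T \<alpha>0)) + 1 = CARD('b)"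
    and d: "det (slice_matrix T g \<alpha>0) = 0"
  obtains c0 x v where "c0 \<noteq> 0" "x \<noteq> 0" "\<And>\<alpha>. phi T \<alpha> v = cscale (x \<alpha>) c0"
proof -
  let ?M = "slice_matrix T g"
  obtain v a where v: "v \<noteq> 0" and a: "a \<noteq> 0"
    and adj: "\<And>q j. adjugate (?M \<alpha>0) $ q $ j = a q * v j"
    using adjugate_slice_matrix_rank_one[OF g corank d adjugate_slice_matrix_ne_0[OF g card corank d]]
    by metis
  define \<gamma>a where "\<gamma>a k = a (inv g k)" for k
  have \<gamma>a_g: "\<gamma>a (g q) = a q" for q
    using g by (simp add: \<gamma>a_def bij_is_inj)
  define P where "P \<alpha> = phiT T \<alpha> \<gamma>a" for \<alpha>
  define Q where "Q \<alpha> = phi T \<alpha> v" for \<alpha>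
  have entry: "(?M \<alpha> ** adjugate (?M \<alpha>0) ** ?M \<beta>) $ j $ j' = P \<alpha> j * Q \<beta> (g j')" for \<alpha> \<beta> j j'
  proof -
    have "(?M \<alpha> ** adjugate (?M \<alpha>0) ** ?M \<beta>) $ j $ j'
        = (\<Sum>r\<in>UNIV. (\<Sum>q\<in>UNIV. ?M \<alpha> $ j $ q * a q) * (v r * ?M \<beta> $ r $ j'))"
      by (simp add: matrix_matrix_mult_def adj sum_distrib_left sum_distrib_right mult_ac)
    also have "\<dots> = P \<alpha> j * Q \<beta> (g j')"
      by (simp add: P_def Q_def phiT_slice_matrix[OF g] phi_slice_matrix \<gamma>a_g sum_distrib_left)
    finally show ?thesis .
  qed
  have sym: "P \<alpha> j * Q \<beta> k = P \<beta> j * Q \<alpha> k" for \<alpha> \<beta> j k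
  proof -
    obtain j' where k: "k = g j'" using g by (metis bij_pointE)
    have "(?M \<alpha> ** adjugate (?M \<alpha>0) ** ?M \<beta>) $ j $ j' = (?M \<beta> ** adjugate (?M \<alpha>0) ** ?M \<alpha>) $ j $ j'"
      by (simp only: strassen_equation_border_rank[OF br, of g \<alpha> \<alpha>0 \<beta>])
    then show ?thesis unfolding entry k .
  qed
  have P_add: "P (\<alpha> + \<beta>) = P \<alpha> + P \<beta>" and Q_add: "Q (\<alpha> + \<beta>) = Q \<alpha> + Q \<beta>" for \<alpha> \<beta>
    by (simp_all add: P_def Q_def phi_add_left phiT_add_left)
  obtain \<alpha>q where Q_ne_0: "Q \<alpha>q \<noteq> 0" using concise_phi_ne_0[OF conc v] unfolding Q_def .
  obtain q where "a q \<noteq> 0" using a by (auto simp: fun_eq_iff)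
  then have "\<gamma>a \<noteq> 0" using \<gamma>a_g[of q] by auto
  then obtain \<alpha>p where P_ne_0: "P \<alpha>p \<noteq> 0"
    unfolding P_def by (rule concise_phiT_ne_0[OF conc])
  obtain c0 x where "c0 \<noteq> 0" "x \<noteq> 0" "\<And>\<alpha>. Q \<alpha> = cscale (x \<alpha>) c0"
    using symmetric_products_collinear[where P = P and Q = Q, OF sym P_add Q_add P_ne_0 Q_ne_0]
    by blast
  then show ?thesis unfolding Q_def by (rule that)
qed

section \<open>Imprimitivity\<close>

lemma pairing_cscale_right: "pairing \<gamma> (cscale s c) = s * pairing \<gamma> c"
  by (simp add: pairing_def sum_distrib_left mult_ac)

lemma inj_phiT_if_inj_on_hyperplane:
  assumes inj: "inj_on (phiT T \<alpha>) {\<gamma>. pairing \<gamma> c0 = 0}"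
    and line: "phi T \<alpha> v = cscale s c0" and s: "s \<noteq> 0"
  shows "inj (phiT T \<alpha>)"
proof -
  interpret lf: Vector_Spaces.linear cscale cscale "phiT T \<alpha>" by (rule linear_phiT)
  show ?thesis unfolding lf.inj_iff_eq_0
  proof (intro allI impI)
    fix \<gamma> assume z: "phiT T \<alpha> \<gamma> = 0"
    have "s * pairing \<gamma> c0 = pairing v (phiT T \<alpha> \<gamma>)"
      by (simp add: pairing_phiT line pairing_cscale_right)
    then have "pairing \<gamma> c0 = 0" using z s by (simp add: pairing_def)
    then show "\<gamma> = 0" using inj z lf.zero by (auto simp: inj_on_def)
  qed
qed

lemma inj_hyperplane_extension:
  fixes f :: "('c::finite \<Rightarrow> complex) \<Rightarrow> ('b \<Rightarrow> complex)"
  assumes lin: "Vector_Spaces.linear cscale cscale f"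
    and inj: "inj_on f {\<gamma>. pairing \<gamma> c0 = 0}"
    and w: "w \<notin> f ` {\<gamma>. pairing \<gamma> c0 = 0}"
    and \<gamma>1: "pairing \<gamma>1 c0 = 1"
  shows "inj (\<lambda>\<gamma>. f (\<gamma> - cscale (pairing \<gamma> c0) \<gamma>1) + cscale (pairing \<gamma> c0) w)"
proof (rule injI)
  interpret lf: Vector_Spaces.linear cscale cscale f by (rule lin)
  let ?H = "{\<gamma>. pairing \<gamma> c0 = 0}"
  let ?h = "\<lambda>\<gamma>. \<gamma> - cscale (pairing \<gamma> c0) \<gamma>1"
  have hH: "?h \<gamma> \<in> ?H" for \<gamma> by (simp add: pairing_diff pairing_cscale \<gamma>1)
  fix \<gamma> \<gamma>' assume eq: "f (?h \<gamma>) + cscale (pairing \<gamma> c0) w = f (?h \<gamma>') + cscale (pairing \<gamma>' c0) w"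
  have same: "pairing \<gamma> c0 = pairing \<gamma>' c0"
  proof (rule ccontr)
    define s where "s = pairing \<gamma>' c0 - pairing \<gamma> c0"
    assume "pairing \<gamma> c0 \<noteq> pairing \<gamma>' c0"
    then have s: "s \<noteq> 0" by (simp add: s_def)
    have "f (?h \<gamma>) - f (?h \<gamma>') = cscale (pairing \<gamma>' c0) w - cscale (pairing \<gamma> c0) w"
      using eq by (simp add: algebra_simps)
    then have "f (?h \<gamma> - ?h \<gamma>') = cscale s w"
      unfolding lf.diff[of "?h \<gamma>" "?h \<gamma>'"] by (simp add: fun_eq_iff s_def algebra_simps)
    then have "f (cscale (inverse s) (?h \<gamma> - ?h \<gamma>')) = w"
      using s by (simp add: lf.scale fun_eq_iff)
    moreover have "cscale (inverse s) (?h \<gamma> - ?h \<gamma>') \<in> ?H"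
      by (simp add: pairing_cscale pairing_diff \<gamma>1)
    ultimately show False using w by blast
  qed
  then have "f (?h \<gamma>) = f (?h \<gamma>')" using eq by simp
  then have "?h \<gamma> = ?h \<gamma>'" using inj hH by (simp add: inj_on_def)
  then show "\<gamma> = \<gamma>'" using same by simp
qed

lemma phiT_image_hyperplane_ne_UNIV:
  fixes T :: "('a::finite,'b::finite,'c::finite) tensor" and g :: "'b \<Rightarrow> 'c"
  assumes g: "bij g" and c0: "c0 \<noteq> 0"
  shows "phiT T \<alpha> ` {\<gamma>. pairing \<gamma> c0 = 0} \<noteq> UNIV"
proof -
  let ?H = "{\<gamma>. pairing \<gamma> c0 = 0}"
  have "cdim (phiT T \<alpha> ` ?H) < CARD('b)"
  proof -
    have "cdim (phiT T \<alpha> ` ?H) \<le> cdim ?H"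
      using hyperplane_pairing_kernel[OF c0]
        cdim_image_add_card_kernel_le[OF linear_phiT, of ?H "{}" T \<alpha>]
      by (simp add: hyperplane_def csubspace_def cs.independent_empty)
    moreover have "cdim ?H < CARD('c)"
      using hyperplane_pairing_kernel[OF c0] by (simp add: hyperplane_def)
    ultimately show ?thesis using bij_betw_same_card[OF g] by simp
  qed
  then show ?thesis
    using cdim_UNIV[where 'i='b] by auto
qed

text \<open>Injectivity on \<open>c0\<^sup>\<perp>\<close> is an open condition: extending \<open>phiT T \<alpha>\<close> from the hyperplane by
  \<open>\<gamma>1 \<mapsto> w\<close>, with \<open>w\<close> outside the image, gives square matrices depending continuously on \<open>\<alpha>\<close>.\<close>

lemma eventually_inj_on_hyperplane_phiT:
  fixes T :: "('a::finite,'b::finite,'c::finite) tensor" and g :: "'b \<Rightarrow> 'c"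
  assumes g: "bij g" and c0: "c0 \<noteq> 0"
    and inj: "inj_on (phiT T \<alpha>1) {\<gamma>. pairing \<gamma> c0 = 0}"
  shows "eventually (\<lambda>t. inj_on (phiT T (\<alpha>1 + cscale t \<alpha>2)) {\<gamma>. pairing \<gamma> c0 = 0}) (at 0)"
proof -
  let ?H = "{\<gamma>. pairing \<gamma> c0 = 0}"
  let ?\<alpha> = "\<lambda>t. \<alpha>1 + cscale t \<alpha>2"
  obtain \<gamma>1 where \<gamma>1: "pairing \<gamma>1 c0 = 1" using pairing_exists_one[OF c0] .
  obtain w where w: "w \<notin> phiT T \<alpha>1 ` ?H"
    using phiT_image_hyperplane_ne_UNIV[OF g c0] by blast
  define K where "K t j k = (\<Sum>i\<in>UNIV. (\<alpha>1 i + t * \<alpha>2 i) * T i j k)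
      - phiT T (?\<alpha> t) \<gamma>1 j * c0 k + w j * c0 k" for t j k
  have ext: "linear_map_of (K t) = (\<lambda>\<gamma>. phiT T (?\<alpha> t) (\<gamma> - cscale (pairing \<gamma> c0) \<gamma>1) + cscale (pairing \<gamma> c0) w)"
    for t
  proof -
    interpret lf: Vector_Spaces.linear cscale cscale "phiT T (?\<alpha> t)" by (rule linear_phiT)
    have "linear_map_of (\<lambda>j k. \<Sum>i\<in>UNIV. (\<alpha>1 i + t * \<alpha>2 i) * T i j k) = phiT T (?\<alpha> t)"
      by (simp add: phiT_eq_linear_map_of)
    then show ?thesis
      by (simp add: fun_eq_iff K_def linear_map_of_def lf.diff lf.scale pairing_def algebra_simps
          sum.distrib sum_subtractf sum_distrib_left sum_distrib_right)
  qed
  have ext_H: "linear_map_of (K t) \<gamma> = phiT T (?\<alpha> t) \<gamma>" if "\<gamma> \<in> ?H" for t \<gamma>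
    using that by (simp add: ext)
  have "inj (linear_map_of (K 0))"
    unfolding ext using inj_hyperplane_extension[OF linear_phiT inj w \<gamma>1] by simp
  then have det0: "det (\<chi> j j'. K 0 j (g j')) \<noteq> 0"
    using inj_linear_map_of_iff_det[OF g] by blast
  have "isCont (\<lambda>t. K t j k) 0" for j k
    unfolding K_def phiT_def by (simp add: cscale_def)
  then have "((\<lambda>t. det (\<chi> j j'. K t j (g j'))) \<longlongrightarrow> det (\<chi> j j'. K 0 j (g j'))) (at 0)"
    by (intro tendsto_det tendsto_vec_lambda) (simp add: isCont_def)
  then have "eventually (\<lambda>t. det (\<chi> j j'. K t j (g j')) \<noteq> 0) (at 0)"
    using det0 by (rule tendsto_imp_eventually_ne)
  then show ?thesis
  proof eventually_elim
    case (elim t)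
    then have "inj (linear_map_of (K t))"
      using inj_linear_map_of_iff_det[OF g] by blast
    then have "inj_on (linear_map_of (K t)) ?H"
      by (rule inj_on_subset) simp
    then show ?case using ext_H by (simp add: inj_on_def)
  qed
qed

lemma rank_on_phiT_hyperplane_le:
  fixes T :: "('a::finite,'b::finite,'c::finite) tensor" and g :: "'b \<Rightarrow> 'c"
  assumes g: "bij g" and not_inj: "\<And>\<alpha>. \<not> inj (phiT T \<alpha>)" and c0: "c0 \<noteq> 0"
    and line: "\<And>\<alpha>. phi T \<alpha> v = cscale (x \<alpha>) c0" and x: "x \<noteq> 0"
  shows "rank_on (phiT T \<alpha>1) {\<gamma>. pairing \<gamma> c0 = 0} \<le> CARD('b) - 2"
proof (rule ccontr)
  let ?H = "{\<gamma>. pairing \<gamma> c0 = 0}"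
  assume "\<not> ?thesis"
  then have "cdim ?H \<le> cdim (phiT T \<alpha>1 ` ?H)"
    using hyperplane_pairing_kernel[OF c0] bij_betw_same_card[OF g]
    by (simp add: rank_on_def hyperplane_def)
  then have inj1: "inj_on (phiT T \<alpha>1) ?H"
    using hyperplane_pairing_kernel[OF c0]
    by (intro inj_on_if_cdim_le_cdim_image[OF linear_phiT]) (simp_all add: hyperplane_def csubspace_def)
  obtain \<alpha>2 where x2: "x \<alpha>2 \<noteq> 0" using x by (auto simp: fun_eq_iff)
  obtain k where k: "c0 k \<noteq> 0" using c0 by (auto simp: fun_eq_iff)
  have x_affine: "x (\<alpha>1 + cscale t \<alpha>2) = x \<alpha>1 + t * x \<alpha>2" for t
  proof -
    have "cscale (x (\<alpha>1 + cscale t \<alpha>2)) c0 = cscale (x \<alpha>1 + t * x \<alpha>2) c0"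
      using line[of "\<alpha>1 + cscale t \<alpha>2"]
      by (simp add: phi_add_left phi_cscale_left line fun_eq_iff algebra_simps)
    then show ?thesis using k by (auto simp: fun_eq_iff)
  qed
  have "eventually (\<lambda>t. t \<noteq> - x \<alpha>1 / x \<alpha>2) (at 0)"
    by (rule eventually_neq_at_within)
  then have "eventually (\<lambda>t. x (\<alpha>1 + cscale t \<alpha>2) \<noteq> 0) (at 0)"
    by eventually_elim (use x2 in \<open>auto simp: x_affine field_simps add_eq_0_iff\<close>)
  moreover have "eventually (\<lambda>t. inj_on (phiT T (\<alpha>1 + cscale t \<alpha>2)) ?H) (at 0)"
    by (rule eventually_inj_on_hyperplane_phiT[OF g c0 inj1])
  ultimately obtain t where "x (\<alpha>1 + cscale t \<alpha>2) \<noteq> 0" "inj_on (phiT T (\<alpha>1 + cscale t \<alpha>2)) ?H"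
    using eventually_happens'[OF at_neq_bot eventually_conj] by blast
  then have "inj (phiT T (\<alpha>1 + cscale t \<alpha>2))"
    using inj_phiT_if_inj_on_hyperplane line by blast
  then show False using not_inj by blast
qed

theorem mainTheorem6:
  fixes T :: "('a::finite, 'b::finite, 'c::finite) tensor"
  assumes "CARD('a) \<le> CARD('b)"
    and "CARD('b) = CARD('c)"
    and "concise T"
    and "primitive_bounded_rank T (CARD('b) - 1)"
  shows "border_rank T \<noteq> CARD('b)"
proof
  assume "border_rank T = CARD('b)"
  then have border: "border_rank_le T CARD('b)"
    using border_rank_le_border_rank by metis
  obtain g :: "'b \<Rightarrow> 'c" where g: "bij g"
    using finite_same_card_bij[of "UNIV :: 'b set" "UNIV :: 'c set"] assms(2) by auto
  have bounded: "bounded_rank T (CARD('b) - 1)" and primitive: "\<not> imprimitive T (CARD('b) - 1)"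
    using assms(4) unfolding primitive_bounded_rank_def by auto
  obtain \<alpha>0 where \<alpha>0: "lrank (phi T \<alpha>0) = CARD('b) - 1"
    using bounded unfolding bounded_rank_def by blast
  have corank: "cdim (range (phi T \<alpha>0)) + 1 = CARD('b)"
    using \<alpha>0 by (simp add: lrank_def rank_on_def)
  have "0 < CARD('c)" by (simp add: card_gt_0_iff)
  then have singular: "det (slice_matrix T g \<alpha>) = 0" for \<alpha>
    using bounded assms(2) unfolding bounded_rank_def
    by (intro det_slice_matrix_eq_0_if_lrank_less[OF g]) (metis diff_less less_one le_less_trans)
  then have not_inj: "\<not> inj (phiT T \<alpha>)" for \<alpha>
    using inj_phiT_iff_det_slice_matrix[OF g] by blast
  obtain c0 x v where c0: "c0 \<noteq> 0" and x: "x \<noteq> 0" and line: "\<And>\<alpha>. phi T \<alpha> v = cscale (x \<alpha>) c0"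
    using border_rank_kernel_line[OF border g assms(2,3) corank singular] by blast
  have "imprimitive T (CARD('b) - 1)"
    unfolding imprimitive_def
    using hyperplane_pairing_kernel[OF c0] rank_on_phiT_hyperplane_le[OF g not_inj c0 line x]
    by (auto simp: numeral_2_eq_2)
  with primitive show False ..
qed

end
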